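(* Consider a $K$-armed bandit with mean reward vector $\mathbf r$ and optimal arm $a^*=\arg\max_a r(a)$, and let $\boldsymbol\theta_t$ be the iterates of LB-SGB (defined in the context) with barrier parameter $\eta>0$. Then for every $t$, $$\pi_{\boldsymbol\theta_t}(a^* )\ge\Big(\frac1K\big(1-\eta\|\nabla\Phi_\eta(\boldsymbol\theta_t)\|_2\big)\Big)^+ ,$$ where $(x)^+=\max\{0,x\}$.
   Context: Softmax policy $\pi_{\boldsymbol\theta}(a)=e^{\theta(a)}/\sum_be^{\theta(b)}$; $\Phi_\eta(\boldsymbol\theta)=\pi_{\boldsymbol\theta}^\top\mathbf r+\frac1\eta\sum_a\log\pi_{\boldsymbol\theta}(a)$. LB-SGB with step size $\alpha$: start from $\boldsymbol\theta=\mathbf 0$; at round $t$ sample $a_t\sim\pi_{\boldsymbol\theta_t}$, observe a reward $R_t(a_t)$ (random with mean $r(a_t)$), set $\hat r_t(a)=\mathbb I\{a_t=a\}R_t(a_t)/\pi_{\boldsymbol\theta_t}(a)$ and update $\boldsymbol\theta_{t+1}=\boldsymbol\theta_t+\alpha\big[(\mathrm{diag}(\pi_{\boldsymbol\theta_t})-\pi_{\boldsymbol\theta_t}\pi_{\boldsymbol\theta_t}^\top)\hat{\mathbf r}_t+\frac1\eta(\mathbf 1-K\pi_{\boldsymbol\theta_t})\big]$. *)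

theory Defs
  imports "HOL-Analysis.Analysis"
begin

text \<open>Arms are the elements of a finite type 'a; K = CARD('a).
  Parameter vectors and reward vectors live in real^'a.\<close>

definition softmax :: "real^'a::finite \<Rightarrow> real^'a" where
  "softmax \<theta> = (\<chi> a. exp (\<theta> $ a) / (\<Sum>b\<in>UNIV. exp (\<theta> $ b)))"

definition Phi :: "real \<Rightarrow> real^'a::finite \<Rightarrow> real^'a \<Rightarrow> real" where
  "Phi \<eta> r \<theta> = softmax \<theta> \<bullet> r + (1 / \<eta>) * (\<Sum>a\<in>UNIV. ln (softmax \<theta> $ a))"

definition grad :: "(real^'a::finite \<Rightarrow> real) \<Rightarrow> real^'a \<Rightarrow> real^'a" where
  "grad f x = (THE g. GDERIV f x :> g)"

definition rhat :: "real^'a::finite \<Rightarrow> 'a \<Rightarrow> real \<Rightarrow> real^'a" where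
  "rhat \<theta> a R = (\<chi> b. if b = a then R / softmax \<theta> $ b else 0)"

text \<open>One LB-SGB update:
  theta + alpha ((diag pi - pi pi^T) rhat + (1/eta)(1 - K pi)).\<close>
definition lbsgb_step :: "real \<Rightarrow> real \<Rightarrow> real^'a::finite \<Rightarrow> 'a \<Rightarrow> real \<Rightarrow> real^'a" where
  "lbsgb_step \<alpha> \<eta> \<theta> a R =
     (let p = softmax \<theta>; g = rhat \<theta> a R in
      \<theta> + \<alpha> *\<^sub>R (\<chi> b. p $ b * g $ b - p $ b * (p \<bullet> g)
                         + (1 / \<eta>) * (1 - real CARD('a) * p $ b)))"

text \<open>Iterates of LB-SGB along a realisation: acts t is the arm sampled at round t,
  rews t the observed reward R_t(a_t). Start from theta_0 = 0.\<close>
fun lbsgb :: "real \<Rightarrow> real \<Rightarrow> (nat \<Rightarrow> 'a::finite) \<Rightarrow> (nat \<Rightarrow> real) \<Rightarrow> nat \<Rightarrow> real^'a" where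
  "lbsgb \<alpha> \<eta> acts rews 0 = 0"
| "lbsgb \<alpha> \<eta> acts rews (Suc t) =
     lbsgb_step \<alpha> \<eta> (lbsgb \<alpha> \<eta> acts rews t) (acts t) (rews t)"

end

theory Submission
  imports Defs
begin

text \<open>The bound holds for every parameter vector, not only for the LB-SGB iterates. The gradient
  of \<open>\<Phi>\<^sub>\<eta>\<close> is \<open>(diag \<pi> - \<pi> \<pi>\<^sup>T) r + (1/\<eta>)(1 - K \<pi>)\<close>, and its component at an optimal arm
  \<open>a\<^sup>*\<close> is \<open>\<pi>(a\<^sup>*) (r(a\<^sup>*) - \<pi>\<^sup>T r) + (1/\<eta>)(1 - K \<pi>(a\<^sup>*))\<close>. The first summand is nonnegative
  because \<open>\<pi>\<^sup>T r\<close> is an average of rewards, none exceeding \<open>r(a\<^sup>*)\<close>; hence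
  \<open>1 - K \<pi>(a\<^sup>*) \<le> \<eta> |\<nabla>\<Phi>\<^sub>\<eta>(\<theta>)\<^sub>a\<^sub>*| \<le> \<eta> \<parallel>\<nabla>\<Phi>\<^sub>\<eta>(\<theta>)\<parallel>\<close>.\<close>

lemma has_derivative_vec_nth [derivative_intros]:
  "((\<lambda>x::real^'n::finite. x $ i) has_derivative (\<lambda>h. h $ i)) F"
  by (rule bounded_linear.has_derivative[OF bounded_linear_vec_nth has_derivative_ident])

lemma grad_eqI:
  fixes f :: "real^'a::finite \<Rightarrow> real"
  assumes "GDERIV f x :> g"
  shows "grad f x = g"
  unfolding grad_def
proof (rule the_equality)
  fix g' assume "GDERIV f x :> g'"
  then have "(\<lambda>h. h \<bullet> g') = (\<lambda>h. h \<bullet> g)"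
    using assms unfolding gderiv_def by (rule has_derivative_unique)
  then show "g' = g"
    by (metis cart_eq_inner_axis inner_commute vec_eq_iff)
qed (fact assms)

lemma sum_exp_pos: "(\<Sum>b\<in>UNIV. exp (\<theta> $ b)) > 0"
  for \<theta> :: "real^'a::finite"
  by (simp add: sum_pos)

lemma softmax_pos: "softmax \<theta> $ a > 0"
  by (simp add: softmax_def sum_pos)

lemma sum_softmax: "(\<Sum>b\<in>UNIV. softmax \<theta> $ b) = 1"
  using sum_exp_pos[of \<theta>] by (simp add: softmax_def sum_divide_distrib[symmetric])

lemma ln_softmax: "ln (softmax \<theta> $ a) = \<theta> $ a - ln (\<Sum>b\<in>UNIV. exp (\<theta> $ b))"
  using sum_exp_pos[of \<theta>] by (simp add: softmax_def ln_div)

lemma softmax_inner_le_max: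
  assumes "\<forall>a. r $ a \<le> r $ astar"
  shows "softmax \<theta> \<bullet> r \<le> r $ astar"
proof -
  have "softmax \<theta> \<bullet> r = (\<Sum>b\<in>UNIV. softmax \<theta> $ b * r $ b)"
    by (simp add: inner_vec_def)
  also have "\<dots> \<le> (\<Sum>b\<in>UNIV. softmax \<theta> $ b * r $ astar)"
    using assms softmax_pos[THEN less_imp_le] by (intro sum_mono mult_left_mono) auto
  also have "\<dots> = r $ astar"
    by (simp add: sum_distrib_right[symmetric] sum_softmax)
  finally show ?thesis .
qed

lemma Phi_eq:
  "Phi \<eta> r \<theta> = softmax \<theta> \<bullet> r
     + (1 / \<eta>) * ((\<Sum>a\<in>UNIV. \<theta> $ a) - real CARD('a) * ln (\<Sum>b\<in>UNIV. exp (\<theta> $ b)))"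
  for \<theta> :: "real^'a::finite"
  by (simp add: Phi_def ln_softmax sum_subtractf)

lemma has_derivative_ln_sum_exp:
  "((\<lambda>x. ln (\<Sum>b\<in>UNIV. exp (x $ b))) has_derivative (\<lambda>h. h \<bullet> softmax \<theta>)) (at \<theta>)"
  for \<theta> :: "real^'a::finite"
proof -
  have "((\<lambda>x. \<Sum>b\<in>UNIV. exp (x $ b)) has_derivative (\<lambda>h. \<Sum>b\<in>UNIV. h $ b * exp (\<theta> $ b))) (at \<theta>)"
    by (auto intro!: derivative_eq_intros)
  from has_derivative_ln[OF sum_exp_pos this] show ?thesis
    by (simp add: softmax_def inner_vec_def sum_divide_distrib field_simps)
qed

lemma has_derivative_softmax_inner:
  "((\<lambda>x. softmax x \<bullet> r) has_derivative
     (\<lambda>h. h \<bullet> (\<chi> b. softmax \<theta> $ b * (r $ b - softmax \<theta> \<bullet> r)))) (at \<theta>)"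
  for \<theta> r :: "real^'a::finite"
proof -
  define Z where "Z = (\<Sum>b\<in>UNIV. exp (\<theta> $ b))"
  define N where "N = (\<Sum>b\<in>UNIV. exp (\<theta> $ b) * r $ b)"
  have Z_pos: "Z > 0"
    unfolding Z_def by (rule sum_exp_pos)
  have softmax_eq: "softmax x \<bullet> r = (\<Sum>b\<in>UNIV. exp (x $ b) * r $ b) / (\<Sum>b\<in>UNIV. exp (x $ b))"
    for x :: "real^'a"
    by (simp add: softmax_def inner_vec_def sum_divide_distrib)
  have "((\<lambda>x. \<Sum>b\<in>UNIV. exp (x $ b) * r $ b) has_derivative
          (\<lambda>h. \<Sum>b\<in>UNIV. h $ b * exp (\<theta> $ b) * r $ b)) (at \<theta>)"
       "((\<lambda>x. \<Sum>b\<in>UNIV. exp (x $ b)) has_derivative (\<lambda>h. \<Sum>b\<in>UNIV. h $ b * exp (\<theta> $ b))) (at \<theta>)"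
    by (auto intro!: derivative_eq_intros)
  from has_derivative_divide'[OF this] Z_pos
  have "((\<lambda>x. softmax x \<bullet> r) has_derivative
          (\<lambda>h. ((\<Sum>b\<in>UNIV. h $ b * exp (\<theta> $ b) * r $ b) * Z - N * (\<Sum>b\<in>UNIV. h $ b * exp (\<theta> $ b)))
               / (Z * Z))) (at \<theta>)"
    unfolding softmax_eq Z_def N_def by simp
  moreover have "((\<Sum>b\<in>UNIV. h $ b * exp (\<theta> $ b) * r $ b) * Z - N * (\<Sum>b\<in>UNIV. h $ b * exp (\<theta> $ b)))
      / (Z * Z) = h \<bullet> (\<chi> b. softmax \<theta> $ b * (r $ b - softmax \<theta> \<bullet> r))" for h :: "real^'a"
  proof -
    have "h \<bullet> (\<chi> b. softmax \<theta> $ b * (r $ b - softmax \<theta> \<bullet> r))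
        = (\<Sum>b\<in>UNIV. h $ b * (exp (\<theta> $ b) / Z * (r $ b - N / Z)))"
      using softmax_eq[of \<theta>] by (simp add: inner_vec_def softmax_def Z_def[symmetric] N_def[symmetric])
    also have "\<dots> = (\<Sum>b\<in>UNIV. h $ b * exp (\<theta> $ b) * r $ b) / Z
        - N / Z * (\<Sum>b\<in>UNIV. h $ b * exp (\<theta> $ b)) / Z"
      by (simp add: algebra_simps sum_subtractf sum_distrib_left sum_divide_distrib)
    also have "\<dots> = ((\<Sum>b\<in>UNIV. h $ b * exp (\<theta> $ b) * r $ b) * Z
        - N * (\<Sum>b\<in>UNIV. h $ b * exp (\<theta> $ b))) / (Z * Z)"
      using Z_pos by (simp add: field_simps)
    finally show ?thesis ..
  qed
  ultimately show ?thesis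
    by simp
qed

lemma GDERIV_Phi:
  "GDERIV (Phi \<eta> r) \<theta> :>
     (\<chi> b. softmax \<theta> $ b * (r $ b - softmax \<theta> \<bullet> r) + (1 / \<eta>) * (1 - real CARD('a) * softmax \<theta> $ b))"
  for \<theta> r :: "real^'a::finite"
proof -
  have "((\<lambda>x. \<Sum>a\<in>UNIV. x $ a) has_derivative (\<lambda>h. \<Sum>a\<in>UNIV. h $ a)) (at \<theta>)"
    by (auto intro!: derivative_eq_intros)
  with has_derivative_softmax_inner has_derivative_ln_sum_exp
  have "(Phi \<eta> r has_derivative (\<lambda>h. h \<bullet> (\<chi> b. softmax \<theta> $ b * (r $ b - softmax \<theta> \<bullet> r))
          + (1 / \<eta>) * ((\<Sum>a\<in>UNIV. h $ a) - real CARD('a) * (h \<bullet> softmax \<theta>)))) (at \<theta>)"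
    unfolding Phi_eq[abs_def]
    by (intro has_derivative_add has_derivative_mult_right has_derivative_diff) auto
  then show ?thesis
    unfolding gderiv_def
    by (rule has_derivative_eq_rhs)
       (auto simp: inner_vec_def sum.distrib sum_subtractf sum_distrib_left algebra_simps)
qed

lemma grad_Phi:
  "grad (Phi \<eta> r) \<theta> =
     (\<chi> b. softmax \<theta> $ b * (r $ b - softmax \<theta> \<bullet> r) + (1 / \<eta>) * (1 - real CARD('a) * softmax \<theta> $ b))"
  for \<theta> r :: "real^'a::finite"
  by (rule grad_eqI[OF GDERIV_Phi])

lemma softmax_optimal_arm_ge:
  fixes r \<theta> :: "real^'a::finite"
  assumes "\<eta> > 0" and optimal: "\<forall>a. r $ a \<le> r $ astar"
  shows "softmax \<theta> $ astar \<ge> max 0 ((1 / real CARD('a)) * (1 - \<eta> * norm (grad (Phi \<eta> r) \<theta>)))"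
proof -
  let ?p = "softmax \<theta> $ astar"
  let ?g = "grad (Phi \<eta> r) \<theta>"
  have "?p * (r $ astar - softmax \<theta> \<bullet> r) \<ge> 0"
    using softmax_inner_le_max[OF optimal] softmax_pos[of \<theta> astar] by simp
  then have "1 - real CARD('a) * ?p \<le> \<eta> * ?g $ astar"
    using \<open>\<eta> > 0\<close> by (simp add: grad_Phi algebra_simps)
  also have "\<dots> \<le> \<eta> * norm ?g"
    using \<open>\<eta> > 0\<close> component_le_norm_cart[of ?g astar] by simp
  finally have "(1 / real CARD('a)) * (1 - \<eta> * norm ?g) \<le> ?p"
    by (simp add: field_simps)
  with softmax_pos[of \<theta> astar] show ?thesis
    by simp
qed

theorem lemma5p3:
  fixes r :: "real^'a::finite" and astar :: 'a
    and \<alpha> \<eta> :: real and acts :: "nat \<Rightarrow> 'a" and rews :: "nat \<Rightarrow> real" and t :: nat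
  assumes "\<eta> > 0"
    and "\<forall>a. r $ a \<le> r $ astar"
  shows "softmax (lbsgb \<alpha> \<eta> acts rews t) $ astar
           \<ge> max 0 ((1 / real CARD('a)) *
                (1 - \<eta> * norm (grad (Phi \<eta> r) (lbsgb \<alpha> \<eta> acts rews t))))"
  using assms by (rule softmax_optimal_arm_ge)

end
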